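(* Let $\mathcal P$ be any set of integer vectors in $\mathbb Z^d$. Then one of the following holds: (i) there is a non-zero $v\in\mathbb R^d$ with $v\cdot p\ge0$ for all $p\in\mathcal P$; (ii) there is a strict sublattice of $\mathbb Z^d$ containing every vector of $\mathcal P$; (iii) there is a finite subset $\mathcal Q=\{q_1,\dots,q_k\}\subseteq\mathcal P$ that is spanning. Moreover, in case (iii), for any norm $\|\cdot\|_M$ on $\mathbb R^d$ there are constants $\mu,\nu$ such that every $z\in\mathbb Z^d$ can be written as $z=q_1+\dots+q_n$ with each $q_i\in\mathcal Q$, $n\le\mu\|z\|_M$ and $\sum_{i=1}^n\|q_i\|_M\le\nu\|z\|_M$.
   Context: A set of vectors in $\mathbb Z^d$ is spanning if every vector of $\mathbb Z^d$ can be written as a finite sum of (possibly repeated) vectors from the set. *)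

theory Defs
  imports "HOL-Analysis.Analysis"
begin

text \<open>Integer vectors of Z^d are modelled as int ^ 'd; the dimension d = CARD('d).\<close>

definition to_real_vec :: "int ^ 'd \<Rightarrow> real ^ 'd" where
  "to_real_vec z = (\<chi> i. real_of_int (z $ i))"

definition spanning :: "(int ^ 'd) set \<Rightarrow> bool" where
  "spanning S \<longleftrightarrow> (\<forall>z. \<exists>qs. set qs \<subseteq> S \<and> sum_list qs = z)"

definition sublattice :: "(int ^ 'd) set \<Rightarrow> bool" where
  "sublattice L \<longleftrightarrow> 0 \<in> L \<and> (\<forall>x\<in>L. \<forall>y\<in>L. x + y \<in> L) \<and> (\<forall>x\<in>L. - x \<in> L)"

definition is_norm :: "(real ^ 'd \<Rightarrow> real) \<Rightarrow> bool" where
  "is_norm N \<longleftrightarrow> (\<forall>x. N x = 0 \<longleftrightarrow> x = 0) \<and> (\<forall>c x. N (c *\<^sub>R x) = \<bar>c\<bar> * N x)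
                 \<and> (\<forall>x y. N (x + y) \<le> N x + N y)"

end

theory Submission
  imports Defs
begin

(* If no nonzero v satisfies v . p >= 0 on P, compactness of the unit sphere gives a finite
   Q1 <= P and delta > 0 such that every unit vector has inner product at most -delta with some
   element of Q1. Hence from every lattice point of norm larger than R^2/delta some step in Q1
   strictly decreases the norm, so every lattice point can be moved into a fixed finite ball by
   adding elements of Q1. A walk that alternately adds q and returns to the ball must revisit a
   point, which writes -q as a sum of elements of Q1 and q. If moreover P lies in no strict
   sublattice, the unit vectors +-e_i are sums of elements of Q0 and -Q0 for a finite Q0 <= P,
   and then Q0 together with Q1 is spanning.
   For a finite spanning Q, each +-e_i is a sum of at most L elements of Q, so z is a sum of at
   most L ||z||_1 of them; the bounds in an arbitrary norm follow since all norms on R^d are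
   equivalent. *)
definition sums_upto :: "'a::monoid_add set \<Rightarrow> nat \<Rightarrow> 'a set" where
  "sums_upto S n = {sum_list xs |xs. set xs \<subseteq> S \<and> length xs \<le> n}"

lemma sums_upto_iff:
  "x \<in> sums_upto S n \<longleftrightarrow> (\<exists>xs. set xs \<subseteq> S \<and> sum_list xs = x \<and> length xs \<le> n)"
  by (auto simp: sums_upto_def)

lemma zero_in_sums_upto [simp]: "0 \<in> sums_upto S n"
  by (auto simp: sums_upto_iff intro!: exI[of _ "[]"])

lemma sums_upto_singleton: "x \<in> S \<Longrightarrow> x \<in> sums_upto S 1"
  by (auto simp: sums_upto_iff intro!: exI[of _ "[x]"])

lemma sums_upto_mono: "S \<subseteq> T \<Longrightarrow> m \<le> n \<Longrightarrow> sums_upto S m \<subseteq> sums_upto T n"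
  by (fastforce simp: sums_upto_iff)

lemma sums_upto_add:
  assumes "x \<in> sums_upto S m" "y \<in> sums_upto S n"
  shows "x + y \<in> sums_upto S (m + n)"
proof -
  obtain xs ys where "set xs \<subseteq> S" "sum_list xs = x" "length xs \<le> m"
    and "set ys \<subseteq> S" "sum_list ys = y" "length ys \<le> n"
    using assms by (auto simp: sums_upto_iff)
  then show ?thesis
    by (auto simp: sums_upto_iff intro!: exI[of _ "xs @ ys"])
qed

lemma sums_upto_sum:
  fixes f :: "'i \<Rightarrow> 'a::comm_monoid_add"
  assumes "finite I" "\<And>i. i \<in> I \<Longrightarrow> f i \<in> sums_upto S (n i)"
  shows "sum f I \<in> sums_upto S (sum n I)"
  using assms by (induction I rule: finite_induct) (auto intro: sums_upto_add)

lemma uminus_in_sums_upto: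
  fixes x :: "'a::ab_group_add"
  assumes "x \<in> sums_upto S n"
  shows "- x \<in> sums_upto (uminus ` S) n"
proof -
  obtain xs where "set xs \<subseteq> S" "sum_list xs = x" "length xs \<le> n"
    using assms by (auto simp: sums_upto_iff)
  moreover have "sum_list (map uminus xs) = - sum_list xs"
    by (induction xs) auto
  ultimately show ?thesis
    unfolding sums_upto_iff by (intro exI[of _ "map uminus xs"]) auto
qed

lemma sums_upto_trans:
  assumes "T \<subseteq> sums_upto S L"
  shows "sums_upto T n \<subseteq> sums_upto S (L * n)"
proof
  fix x assume "x \<in> sums_upto T n"
  then obtain xs where xs: "set xs \<subseteq> T" "sum_list xs = x" "length xs \<le> n"
    by (auto simp: sums_upto_iff)
  have "sum_list xs \<in> sums_upto S (L * length xs)"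
    using xs(1) assms by (induction xs) (auto dest: sums_upto_add)
  then show "x \<in> sums_upto S (L * n)"
    using xs sums_upto_mono[of S S "L * length xs" "L * n"] by auto
qed

lemma finite_subset_sums_upto:
  assumes "finite T" "T \<subseteq> (\<Union>n. sums_upto S n)"
  shows "\<exists>S' L. finite S' \<and> S' \<subseteq> S \<and> T \<subseteq> sums_upto S' L"
  using assms
proof (induction T rule: finite_induct)
  case empty
  then show ?case by auto
next
  case (insert t T)
  then obtain S' L where S': "finite S'" "S' \<subseteq> S" "T \<subseteq> sums_upto S' L"
    by auto
  obtain xs where xs: "set xs \<subseteq> S" "sum_list xs = t"
    using insert.prems by (auto simp: sums_upto_iff)
  have "T \<subseteq> sums_upto (S' \<union> set xs) (max L (length xs))"
    using S'(3) sums_upto_mono[of S' "S' \<union> set xs" L "max L (length xs)"] by auto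
  moreover have "t \<in> sums_upto (S' \<union> set xs) (max L (length xs))"
    using xs by (auto simp: sums_upto_iff)
  ultimately show ?case
    using S' xs by (intro exI[of _ "S' \<union> set xs"] exI[of _ "max L (length xs)"]) auto
qed

lemma ex_sums_upto_iff:
  "(\<exists>n. x \<in> sums_upto S n) \<longleftrightarrow> (\<exists>xs. set xs \<subseteq> S \<and> sum_list xs = x)"
  by (auto simp: sums_upto_iff)

lemma spanning_iff_UN_sums_upto: "spanning S \<longleftrightarrow> (\<Union>n. sums_upto S n) = UNIV"
  by (simp add: spanning_def set_eq_iff ex_sums_upto_iff)

lemma UN_sums_upto_trans:
  assumes "T \<subseteq> (\<Union>n. sums_upto S n)"
  shows "(\<Union>n. sums_upto T n) \<subseteq> (\<Union>n. sums_upto S n)"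
proof
  fix x assume "x \<in> (\<Union>n. sums_upto T n)"
  then obtain xs where xs: "set xs \<subseteq> T" "sum_list xs = x"
    by (auto simp: sums_upto_iff)
  obtain S' L where S': "S' \<subseteq> S" "set xs \<subseteq> sums_upto S' L"
    using finite_subset_sums_upto[of "set xs" S] xs(1) assms by blast
  have "x \<in> sums_upto (set xs) (length xs)"
    using xs by (auto simp: sums_upto_iff)
  also have "\<dots> \<subseteq> sums_upto S' (L * length xs)"
    using S'(2) by (rule sums_upto_trans)
  also have "\<dots> \<subseteq> sums_upto S (L * length xs)"
    using S'(1) by (rule sums_upto_mono) simp
  finally show "x \<in> (\<Union>n. sums_upto S n)" by blast
qed

lemma uminus_in_sums_upto_if_recurrent:
  fixes q :: "'a::ab_group_add"
  assumes "finite F" and "\<And>w. \<exists>xs. set xs \<subseteq> Q \<and> w + sum_list xs \<in> F"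
  shows "\<exists>n. - q \<in> sums_upto (insert q Q) n"
proof -
  obtain r where r: "\<And>w. set (r w) \<subseteq> Q \<and> w + sum_list (r w) \<in> F"
    using assms(2) by metis
  \<comment> \<open>step by \<open>q\<close>, then return into \<open>F\<close>; a repeated point closes a loop through \<open>q\<close>\<close>
  define W where "W k = ((\<lambda>w. w + q + sum_list (r (w + q))) ^^ k) 0" for k
  have W_Suc: "W (Suc k) = W k + q + sum_list (r (W k + q))" for k
    by (simp add: W_def)
  have "W k \<in> insert 0 F" for k
  proof (cases k)
    case 0
    then show ?thesis by (simp add: W_def)
  next
    case (Suc j)
    then show ?thesis using r[of "W j + q"] by (simp add: W_Suc)
  qed
  then have "range W \<subseteq> insert 0 F" by blast
  then have "\<not> inj W"
    using assms(1) finite_subset infinite_UNIV_nat finite_imageD by blast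
  then obtain a b where ab: "a < b" "W a = W b"
    unfolding inj_def by (metis linorder_neqE_nat)
  have "\<exists>ys. set ys \<subseteq> insert q Q \<and> W (a + Suc k) = W a + q + sum_list ys" for k
  proof (induction k)
    case 0
    show ?case
      using r by (intro exI[of _ "r (W a + q)"]) (auto simp: W_Suc)
  next
    case (Suc k)
    then obtain ys where ys: "set ys \<subseteq> insert q Q" "W (a + Suc k) = W a + q + sum_list ys"
      by blast
    show ?case
      using ys r by (intro exI[of _ "ys @ q # r (W (a + Suc k) + q)"]) (auto simp: W_Suc add_ac)
  qed
  then obtain ys where "set ys \<subseteq> insert q Q" "W b = W a + q + sum_list ys"
    using ab(1) by (metis Suc_diff_Suc add_diff_inverse_nat not_less_iff_gr_or_eq)
  with ab(2) show ?thesis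
    by (auto simp: sums_upto_iff add.assoc add_eq_0_iff intro!: exI[of _ "length ys"])
qed

definition unit_vectors :: "(int ^ 'd) set" where
  "unit_vectors = range (\<lambda>i. axis i 1) \<union> range (\<lambda>i. - axis i 1)"

lemma finite_unit_vectors: "finite unit_vectors"
  by (simp add: unit_vectors_def)

lemma scaled_axis_in_sums_upto: "k *s axis i 1 \<in> sums_upto unit_vectors (nat \<bar>k\<bar>)"
proof -
  have multiple: "int n *s v \<in> sums_upto {v} n" for n and v :: "int ^ 'd"
  proof (induction n)
    case (Suc n)
    then have "int n *s v + v \<in> sums_upto {v} (n + 1)"
      by (intro sums_upto_add sums_upto_singleton) auto
    then show ?case by (simp add: vector_sadd_rdistrib add.commute)
  qed simp
  show ?thesis
  proof (cases "k \<ge> 0")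
    case True
    then show ?thesis
      using multiple[of "nat k" "axis i 1"] sums_upto_mono[of "{axis i 1}" unit_vectors]
      by (auto simp: unit_vectors_def)
  next
    case False
    then have "k *s axis i 1 = int (nat \<bar>k\<bar>) *s (- axis i 1)"
      by (simp add: vec_eq_iff)
    then show ?thesis
      using multiple[of "nat \<bar>k\<bar>" "- axis i 1"] sums_upto_mono[of "{- axis i 1}" unit_vectors]
      by (auto simp: unit_vectors_def)
  qed
qed

lemma in_sums_upto_unit_vectors: "z \<in> sums_upto unit_vectors (\<Sum>i\<in>UNIV. nat \<bar>z $ i\<bar>)"
proof -
  have "(\<Sum>i\<in>UNIV. z $ i *s axis i 1) \<in> sums_upto unit_vectors (\<Sum>i\<in>UNIV. nat \<bar>z $ i\<bar>)"
    by (rule sums_upto_sum) (simp_all add: scaled_axis_in_sums_upto)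
  then show ?thesis by (simp add: basis_expansion)
qed

lemma sums_upto_l1_if_unit_vectors:
  assumes "unit_vectors \<subseteq> sums_upto S L"
  shows "z \<in> sums_upto S (L * (\<Sum>i\<in>UNIV. nat \<bar>z $ i\<bar>))"
  using sums_upto_trans[OF assms] in_sums_upto_unit_vectors by blast

lemma spanning_iff_unit_vectors: "spanning S \<longleftrightarrow> (\<exists>L. unit_vectors \<subseteq> sums_upto S L)"
proof
  assume "spanning S"
  then obtain S' L where "S' \<subseteq> S" "unit_vectors \<subseteq> sums_upto S' L"
    using finite_subset_sums_upto[OF finite_unit_vectors, of S]
    by (auto simp: spanning_iff_UN_sums_upto)
  then show "\<exists>L. unit_vectors \<subseteq> sums_upto S L"
    using sums_upto_mono[of S' S L L] by auto
next
  assume "\<exists>L. unit_vectors \<subseteq> sums_upto S L"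
  then obtain L where "unit_vectors \<subseteq> sums_upto S L" ..
  then show "spanning S"
    unfolding spanning_iff_UN_sums_upto using sums_upto_l1_if_unit_vectors by blast
qed

lemma sublattice_UN_sums_upto:
  "sublattice (\<Union>n. sums_upto (S \<union> uminus ` S) n)"
  unfolding sublattice_def
proof (intro conjI ballI)
  show "0 \<in> (\<Union>n. sums_upto (S \<union> uminus ` S) n)" by simp
next
  fix x y assume "x \<in> (\<Union>n. sums_upto (S \<union> uminus ` S) n)" "y \<in> (\<Union>n. sums_upto (S \<union> uminus ` S) n)"
  then show "x + y \<in> (\<Union>n. sums_upto (S \<union> uminus ` S) n)"
    by (blast intro: sums_upto_add)
next
  fix x assume "x \<in> (\<Union>n. sums_upto (S \<union> uminus ` S) n)"
  then obtain n where "- x \<in> sums_upto (uminus ` (S \<union> uminus ` S)) n"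
    by (blast dest: uminus_in_sums_upto)
  moreover have "uminus ` (S \<union> uminus ` S) = S \<union> uminus ` S"
    by (auto simp: image_Un image_image)
  ultimately show "- x \<in> (\<Union>n. sums_upto (S \<union> uminus ` S) n)" by auto
qed

lemma finite_subset_spanning_symmetric:
  fixes P :: "(int ^ 'd) set"
  assumes "\<nexists>L. sublattice L \<and> L \<noteq> UNIV \<and> P \<subseteq> L"
  shows "\<exists>Q. finite Q \<and> Q \<subseteq> P \<and> spanning (Q \<union> uminus ` Q)"
proof -
  have "P \<subseteq> (\<Union>n. sums_upto (P \<union> uminus ` P) n)"
    by (blast intro: sums_upto_singleton)
  then have "(\<Union>n. sums_upto (P \<union> uminus ` P) n) = UNIV"
    using assms sublattice_UN_sums_upto by blast
  then obtain S L where S: "finite S" "S \<subseteq> P \<union> uminus ` P" "unit_vectors \<subseteq> sums_upto S L"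
    using finite_subset_sums_upto[OF finite_unit_vectors, of "P \<union> uminus ` P"] by auto
  define Q where "Q = P \<inter> (S \<union> uminus ` S)"
  have "S \<subseteq> Q \<union> uminus ` Q"
    using S(2) by (force simp: Q_def)
  then have "unit_vectors \<subseteq> sums_upto (Q \<union> uminus ` Q) L"
    using S(3) sums_upto_mono[of S "Q \<union> uminus ` Q" L L] by auto
  moreover have "finite Q"
    using S(1) by (simp add: Q_def)
  ultimately show ?thesis
    unfolding spanning_iff_unit_vectors Q_def by blast
qed

lemma uniformly_negative_on_sphere:
  fixes P :: "'a::euclidean_space set"
  assumes "\<And>v. v \<noteq> 0 \<Longrightarrow> \<exists>p\<in>P. v \<bullet> p < 0"
  shows "\<exists>F \<delta>. finite F \<and> F \<subseteq> P \<and> \<delta> > 0 \<and> (\<forall>v\<in>sphere 0 1. \<exists>p\<in>F. v \<bullet> p \<le> - \<delta>)"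
proof -
  define U where "U = (\<lambda>(p, n::nat). {v::'a. p \<bullet> v < - 1 / real (Suc n)})"
  have "open (U c)" for c
    by (cases c) (simp add: U_def open_halfspace_lt)
  moreover have "sphere 0 1 \<subseteq> (\<Union>c\<in>P \<times> UNIV. U c)"
  proof
    fix v :: 'a assume "v \<in> sphere 0 1"
    then have "v \<noteq> 0" by auto
    then obtain p where p: "p \<in> P" "v \<bullet> p < 0"
      using assms by blast
    then obtain n where "inverse (real (Suc n)) < - (v \<bullet> p)"
      using reals_Archimedean[of "- (v \<bullet> p)"] by auto
    then have "v \<in> U (p, n)"
      by (simp add: U_def inner_commute divide_inverse)
    then show "v \<in> (\<Union>c\<in>P \<times> UNIV. U c)"
      using p(1) by blast
  qed
  ultimately obtain C where C: "C \<subseteq> P \<times> UNIV" "finite C" "sphere 0 1 \<subseteq> (\<Union>c\<in>C. U c)"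
    using compactE_image[OF compact_sphere] by metis
  \<comment> \<open>below every threshold \<open>1 / (n + 1)\<close> occurring in the finite subcover\<close>
  define \<delta> where "\<delta> = 1 / real (Suc (\<Sum>c\<in>C. snd c))"
  have "\<exists>p\<in>fst ` C. v \<bullet> p \<le> - \<delta>" if v: "v \<in> sphere 0 1" for v
  proof -
    obtain p n where pn: "(p, n) \<in> C" "v \<in> U (p, n)"
      using C(3) v by auto
    have "n \<le> (\<Sum>c\<in>C. snd c)"
      using member_le_sum[OF pn(1), of snd] C(2) by simp
    then have "\<delta> \<le> 1 / real (Suc n)"
      unfolding \<delta>_def by (intro divide_left_mono) (simp_all del: of_nat_Suc)
    moreover have "v \<bullet> p < - 1 / real (Suc n)"
      using pn(2) by (simp add: U_def inner_commute)
    moreover have "p \<in> fst ` C"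
      using pn(1) by (metis fst_conv image_eqI)
    ultimately show ?thesis
      by (metis minus_divide_left neg_le_iff_le order.strict_trans2 less_imp_le)
  qed
  moreover have "\<delta> > 0"
    unfolding \<delta>_def by (simp del: of_nat_Suc)
  ultimately show ?thesis
    using C(1,2) by (intro exI[of _ "fst ` C"] exI[of _ \<delta>]) auto
qed

lemma norm_add_less_if_inner_negative:
  fixes a b :: "'a::real_inner"
  assumes "a \<bullet> b \<le> - (\<delta> * norm a)" "norm b \<le> R" "R\<^sup>2 < \<delta> * norm a"
  shows "norm (a + b) < norm a"
proof -
  have "(norm b)\<^sup>2 \<le> R\<^sup>2"
    using assms(2) by (simp add: power_mono)
  have "(norm (a + b))\<^sup>2 = (norm a)\<^sup>2 + 2 * (a \<bullet> b) + (norm b)\<^sup>2"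
    by (simp add: power2_norm_eq_inner algebra_simps inner_commute)
  also have "\<dots> < (norm a)\<^sup>2"
    using assms(1,3) \<open>(norm b)\<^sup>2 \<le> R\<^sup>2\<close> zero_le_power2[of R] by linarith
  finally show ?thesis
    by (simp add: power_less_imp_less_base)
qed

lemma to_real_vec_add: "to_real_vec (x + y) = to_real_vec x + to_real_vec y"
  by (simp add: to_real_vec_def vec_eq_iff)

lemma finite_lattice_ball: "finite {z :: int ^ 'd. norm (to_real_vec z) \<le> B}"
proof -
  define K where "K = \<lceil>B\<rceil>"
  have "{z :: int ^ 'd. norm (to_real_vec z) \<le> B} \<subseteq> vec_lambda ` (PiE UNIV (\<lambda>_. {-K..K}))"
  proof
    fix z :: "int ^ 'd" assume "z \<in> {z. norm (to_real_vec z) \<le> B}"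
    then have "real_of_int \<bar>z $ i\<bar> \<le> B" for i
      using component_le_norm_cart[of "to_real_vec z" i] by (simp add: to_real_vec_def)
    then have "\<bar>z $ i\<bar> \<le> K" for i
      unfolding K_def by (meson le_of_int_ceiling of_int_le_iff order_trans)
    then have "vec_nth z \<in> PiE UNIV (\<lambda>_. {-K..K})"
      by (auto simp: PiE_UNIV_domain abs_le_iff Pi_iff minus_le_iff)
    then show "z \<in> vec_lambda ` (PiE UNIV (\<lambda>_. {-K..K}))"
      by (metis image_eqI vec_nth_inverse)
  qed
  then show ?thesis
    by (rule finite_subset) (intro finite_imageI finite_PiE; simp)
qed

lemma lattice_descent:
  fixes Q :: "(int ^ 'd) set"
  assumes "finite Q" "\<delta> > 0"
    and negative: "\<forall>v\<in>sphere 0 1. \<exists>p\<in>Q. v \<bullet> to_real_vec p \<le> - \<delta>"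
  shows "\<exists>T. \<forall>w. \<exists>xs. set xs \<subseteq> Q \<and> norm (to_real_vec (w + sum_list xs)) \<le> T"
proof -
  define R where "R = (\<Sum>p\<in>Q. norm (to_real_vec p))"
  define T where "T = R\<^sup>2 / \<delta>"
  have step: "\<exists>p\<in>Q. norm (to_real_vec (w + p)) < norm (to_real_vec w)"
    if w: "T < norm (to_real_vec w)" for w
  proof -
    define a where "a = to_real_vec w"
    have "T \<ge> 0"
      using assms(2) by (simp add: T_def)
    then have "norm a > 0"
      using w unfolding a_def by linarith
    then have "a /\<^sub>R norm a \<in> sphere 0 1"
      by simp
    then obtain p where p: "p \<in> Q" "(a /\<^sub>R norm a) \<bullet> to_real_vec p \<le> - \<delta>"
      using negative by blast
    have "(a /\<^sub>R norm a) \<bullet> to_real_vec p = (a \<bullet> to_real_vec p) / norm a"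
      by (simp add: divide_inverse_commute)
    then have "a \<bullet> to_real_vec p \<le> - (\<delta> * norm a)"
      using p(2) \<open>norm a > 0\<close> by (simp add: divide_le_eq)
    moreover have "norm (to_real_vec p) \<le> R"
      unfolding R_def using assms(1) p(1) by (intro member_le_sum) auto
    moreover have "R\<^sup>2 < \<delta> * norm a"
      using w assms(2) unfolding T_def a_def by (metis pos_divide_less_eq mult.commute)
    ultimately have "norm (a + to_real_vec p) < norm a"
      by (rule norm_add_less_if_inner_negative)
    then show ?thesis
      using p(1) by (auto simp: a_def to_real_vec_add)
  qed
  have "\<exists>xs. set xs \<subseteq> Q \<and> norm (to_real_vec (w + sum_list xs)) \<le> T" for w
  proof (induction "card {z :: int ^ 'd. norm (to_real_vec z) < norm (to_real_vec w)}"
      arbitrary: w rule: less_induct)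
    case less
    show ?case
    proof (cases "norm (to_real_vec w) \<le> T")
      case True
      then show ?thesis by (intro exI[of _ "[]"]) simp
    next
      case False
      then obtain p where p: "p \<in> Q" "norm (to_real_vec (w + p)) < norm (to_real_vec w)"
        using step[of w] by auto
      let ?closer = "\<lambda>u. {z :: int ^ 'd. norm (to_real_vec z) < norm (to_real_vec u)}"
      have "?closer (w + p) \<subseteq> ?closer w"
        using p(2) by auto
      moreover have "w + p \<in> ?closer w - ?closer (w + p)"
        using p(2) by simp
      ultimately have "?closer (w + p) \<subset> ?closer w"
        by blast
      moreover have "finite (?closer w)"
        using finite_lattice_ball[of "norm (to_real_vec w)"] by (rule finite_subset[rotated]) auto
      ultimately have "card (?closer (w + p)) < card (?closer w)"
        by (rule psubset_card_mono[rotated])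
      then obtain xs where "set xs \<subseteq> Q" "norm (to_real_vec (w + p + sum_list xs)) \<le> T"
        using less by blast
      then show ?thesis
        using p(1) by (intro exI[of _ "p # xs"]) (simp add: add.assoc)
    qed
  qed
  then show ?thesis by blast
qed

lemma finite_spanning_subset:
  fixes P :: "(int ^ 'd) set"
  assumes no_halfspace: "\<nexists>v. v \<noteq> 0 \<and> (\<forall>p\<in>P. v \<bullet> to_real_vec p \<ge> 0)"
    and no_sublattice: "\<nexists>L. sublattice L \<and> L \<noteq> UNIV \<and> P \<subseteq> L"
  shows "\<exists>Q. finite Q \<and> Q \<subseteq> P \<and> spanning Q"
proof -
  obtain Q0 where Q0: "finite Q0" "Q0 \<subseteq> P" "spanning (Q0 \<union> uminus ` Q0)"
    using finite_subset_spanning_symmetric[OF no_sublattice] by blast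
  have "\<exists>p\<in>to_real_vec ` P. v \<bullet> p < 0" if "v \<noteq> 0" for v
    using no_halfspace that by (force simp: not_le)
  then obtain F \<delta> where F: "finite F" "F \<subseteq> to_real_vec ` P" "\<delta> > 0"
      "\<forall>v\<in>sphere 0 1. \<exists>p\<in>F. v \<bullet> p \<le> - \<delta>"
    by (metis uniformly_negative_on_sphere)
  obtain Q1 where Q1: "finite Q1" "Q1 \<subseteq> P" "F = to_real_vec ` Q1"
    using finite_subset_image[OF F(1,2)] by blast
  have "\<forall>v\<in>sphere 0 1. \<exists>p\<in>Q1. v \<bullet> to_real_vec p \<le> - \<delta>"
    using F(4) unfolding Q1(3) by blast
  then obtain T where "\<forall>w. \<exists>xs. set xs \<subseteq> Q1 \<and> norm (to_real_vec (w + sum_list xs)) \<le> T"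
    using lattice_descent[OF Q1(1) F(3)] by blast
  then have descent: "\<exists>xs. set xs \<subseteq> Q1 \<and> w + sum_list xs \<in> {z. norm (to_real_vec z) \<le> T}" for w
    by simp
  have "Q0 \<union> uminus ` Q0 \<subseteq> (\<Union>n. sums_upto (Q0 \<union> Q1) n)"
  proof -
    have "- q \<in> (\<Union>n. sums_upto (Q0 \<union> Q1) n)" if "q \<in> Q0" for q
    proof -
      obtain n where "- q \<in> sums_upto (insert q Q1) n"
        using uminus_in_sums_upto_if_recurrent[OF finite_lattice_ball descent] by blast
      then show ?thesis
        using that sums_upto_mono[of "insert q Q1" "Q0 \<union> Q1" n n] by auto
    qed
    then show ?thesis
      by (auto intro: sums_upto_singleton)
  qed
  then have "(\<Union>n. sums_upto (Q0 \<union> uminus ` Q0) n) \<subseteq> (\<Union>n. sums_upto (Q0 \<union> Q1) n)"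
    by (rule UN_sums_upto_trans)
  then have "spanning (Q0 \<union> Q1)"
    using Q0(3) by (auto simp: spanning_iff_UN_sums_upto)
  then show ?thesis
    using Q0 Q1 by blast
qed

lemma is_norm_nonneg:
  assumes "is_norm N"
  shows "0 \<le> N x"
proof -
  have "N (x + - x) \<le> N x + N (- x)"
    using assms unfolding is_norm_def by blast
  moreover have "N ((- 1) *\<^sub>R x) = \<bar>- 1\<bar> * N x"
    using assms unfolding is_norm_def by blast
  moreover have "N 0 = 0"
    using assms by (simp add: is_norm_def)
  ultimately show ?thesis by simp
qed

lemma is_norm_convex_on:
  assumes "is_norm N"
  shows "convex_on UNIV N"
proof (rule convex_onI)
  fix t :: real and x y
  assume t: "0 < t" "t < 1"
  have "N ((1 - t) *\<^sub>R x + t *\<^sub>R y) \<le> N ((1 - t) *\<^sub>R x) + N (t *\<^sub>R y)"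
    using assms unfolding is_norm_def by blast
  also have "\<dots> = (1 - t) * N x + t * N y"
    using assms t by (simp add: is_norm_def)
  finally show "N ((1 - t) *\<^sub>R x + t *\<^sub>R y) \<le> (1 - t) * N x + t * N y" .
qed simp

lemma is_norm_lower_bound:
  fixes N :: "real ^ 'd \<Rightarrow> real"
  assumes "is_norm N"
  shows "\<exists>m>0. \<forall>x. m * norm x \<le> N x"
proof -
  have continuous: "continuous_on (sphere 0 1) N"
    using convex_on_continuous[OF open_UNIV is_norm_convex_on[OF assms]]
    by (rule continuous_on_subset) simp
  obtain x0 :: "real ^ 'd" where x0: "x0 \<in> sphere 0 1" "\<forall>y\<in>sphere 0 1. N x0 \<le> N y"
    using continuous_attains_inf[OF compact_sphere _ continuous] by auto
  have "x0 \<noteq> 0"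
    using x0(1) by auto
  then have "N x0 \<noteq> 0"
    using assms by (simp add: is_norm_def)
  then have "N x0 > 0"
    using is_norm_nonneg[OF assms, of x0] by simp
  moreover have "N x0 * norm x \<le> N x" for x
  proof (cases "x = 0")
    case True
    then show ?thesis using is_norm_nonneg[OF assms] by simp
  next
    case False
    then have "N x0 \<le> N (x /\<^sub>R norm x)"
      using x0(2) by simp
    also have "\<dots> = N x / norm x"
      using assms by (simp add: is_norm_def divide_inverse_commute)
    finally show ?thesis
      using False by (simp add: field_simps)
  qed
  ultimately show ?thesis by blast
qed

lemma is_norm_dominates_l1:
  fixes N :: "real ^ 'd \<Rightarrow> real"
  assumes "is_norm N"
  shows "\<exists>c. \<forall>x. (\<Sum>i\<in>UNIV. \<bar>x $ i\<bar>) \<le> c * N x"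
proof -
  obtain m where m: "m > 0" "\<forall>x. m * norm x \<le> N x"
    using is_norm_lower_bound[OF assms] by blast
  have "(\<Sum>i\<in>UNIV. \<bar>x $ i\<bar>) \<le> real CARD('d) / m * N x" for x
  proof -
    have "(\<Sum>i\<in>UNIV. \<bar>x $ i\<bar>) \<le> (\<Sum>i\<in>(UNIV :: 'd set). norm x)"
      by (intro sum_mono component_le_norm_cart)
    also have "\<dots> = real CARD('d) * norm x"
      by simp
    also have "\<dots> \<le> real CARD('d) * (N x / m)"
      using m by (intro mult_left_mono) (simp_all add: field_simps)
    finally show ?thesis
      by simp
  qed
  then show ?thesis by blast
qed

lemma spanning_sums_upto_norm_bounds:
  fixes Q :: "(int ^ 'd) set"
  assumes "finite Q" "spanning Q" "is_norm N"
  shows "\<exists>\<mu> \<nu> :: real. \<forall>z. \<exists>qs. set qs \<subseteq> Q \<and> sum_list qs = z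
           \<and> real (length qs) \<le> \<mu> * N (to_real_vec z)
           \<and> (\<Sum>q\<leftarrow>qs. N (to_real_vec q)) \<le> \<nu> * N (to_real_vec z)"
proof -
  obtain L where L: "unit_vectors \<subseteq> sums_upto Q L"
    using assms(2) by (auto simp: spanning_iff_unit_vectors)
  obtain c where c: "\<forall>x. (\<Sum>i\<in>UNIV. \<bar>x $ i\<bar>) \<le> c * N x"
    using is_norm_dominates_l1[OF assms(3)] by blast
  define M where "M = (\<Sum>q\<in>Q. N (to_real_vec q))"
  have "M \<ge> 0"
    unfolding M_def using is_norm_nonneg[OF assms(3)] by (simp add: sum_nonneg)
  define \<mu> where "\<mu> = real L * c"
  show ?thesis
  proof (rule exI[of _ \<mu>], rule exI[of _ "\<mu> * M"], rule allI)
    fix z :: "int ^ 'd"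
    obtain qs where qs: "set qs \<subseteq> Q" "sum_list qs = z" "length qs \<le> L * (\<Sum>i\<in>UNIV. nat \<bar>z $ i\<bar>)"
      using sums_upto_l1_if_unit_vectors[OF L, of z] by (auto simp: sums_upto_iff)
    have "real (length qs) \<le> real (L * (\<Sum>i\<in>UNIV. nat \<bar>z $ i\<bar>))"
      using qs(3) by (simp only: of_nat_le_iff)
    also have "\<dots> = real L * (\<Sum>i\<in>UNIV. \<bar>to_real_vec z $ i\<bar>)"
      by (simp add: to_real_vec_def of_nat_sum)
    also have "\<dots> \<le> \<mu> * N (to_real_vec z)"
      using c unfolding \<mu>_def by (simp add: mult_left_mono mult.assoc)
    finally have len: "real (length qs) \<le> \<mu> * N (to_real_vec z)" .
    have "(\<Sum>q\<leftarrow>qs. N (to_real_vec q)) \<le> (\<Sum>q\<leftarrow>qs. M)"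
      using qs(1) assms(1) is_norm_nonneg[OF assms(3)] unfolding M_def
      by (intro sum_list_mono member_le_sum) auto
    also have "\<dots> = real (length qs) * M"
      by (simp add: sum_list_triv)
    also have "\<dots> \<le> \<mu> * N (to_real_vec z) * M"
      using len \<open>M \<ge> 0\<close> by (rule mult_right_mono)
    also have "\<dots> = \<mu> * M * N (to_real_vec z)"
      by (simp add: mult_ac)
    finally have "(\<Sum>q\<leftarrow>qs. N (to_real_vec q)) \<le> \<mu> * M * N (to_real_vec z)" .
    with qs(1,2) len show "\<exists>qs. set qs \<subseteq> Q \<and> sum_list qs = z \<and> real (length qs) \<le> \<mu> * N (to_real_vec z)
        \<and> (\<Sum>q\<leftarrow>qs. N (to_real_vec q)) \<le> \<mu> * M * N (to_real_vec z)"
      by (intro exI[of _ qs] conjI)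
  qed
qed

theorem lemma2p6:
  fixes P :: "(int ^ 'd) set"
  shows "((\<exists>v :: real ^ 'd. v \<noteq> 0 \<and> (\<forall>p\<in>P. v \<bullet> to_real_vec p \<ge> 0))
          \<or> (\<exists>L. sublattice L \<and> L \<noteq> UNIV \<and> P \<subseteq> L)
          \<or> (\<exists>Q. finite Q \<and> Q \<subseteq> P \<and> spanning Q))
       \<and> (\<forall>Q. finite Q \<and> Q \<subseteq> P \<and> spanning Q \<longrightarrow>
            (\<forall>N. is_norm N \<longrightarrow>
              (\<exists>\<mu> \<nu> :: real. \<forall>z. \<exists>qs. set qs \<subseteq> Q \<and> sum_list qs = z
                 \<and> real (length qs) \<le> \<mu> * N (to_real_vec z)
                 \<and> (\<Sum>q\<leftarrow>qs. N (to_real_vec q)) \<le> \<nu> * N (to_real_vec z))))"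
proof (intro conjI allI impI)
  show "(\<exists>v :: real ^ 'd. v \<noteq> 0 \<and> (\<forall>p\<in>P. v \<bullet> to_real_vec p \<ge> 0))
      \<or> (\<exists>L. sublattice L \<and> L \<noteq> UNIV \<and> P \<subseteq> L)
      \<or> (\<exists>Q. finite Q \<and> Q \<subseteq> P \<and> spanning Q)"
    using finite_spanning_subset[of P] by blast
next
  fix Q and N :: "real ^ 'd \<Rightarrow> real"
  assume "finite Q \<and> Q \<subseteq> P \<and> spanning Q" and "is_norm N"
  then show "\<exists>\<mu> \<nu> :: real. \<forall>z. \<exists>qs. set qs \<subseteq> Q \<and> sum_list qs = z
      \<and> real (length qs) \<le> \<mu> * N (to_real_vec z)
      \<and> (\<Sum>q\<leftarrow>qs. N (to_real_vec q)) \<le> \<nu> * N (to_real_vec z)"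
    using spanning_sums_upto_norm_bounds by blast
qed

end
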